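(* Let $G$ and $H$ be finitely generated groups acting transitively on sets $X$ and $Y$ respectively. If $\mathrm{Con}(G\curvearrowright X)=\mathrm{Con}(H\curvearrowright Y)$, then $|X|=|Y|$.
   Context: For an action $G\curvearrowright X$, an ordered tuple $\mathfrak{g}=(g_1,\dots,g_n)$ of elements of $G$ and a finite partition $\mathcal{E}=\{E_1,\dots,E_m\}$ of $X$ (a configuration pair), a configuration is a tuple $C=(C_0,\dots,C_n)\in\{1,\dots,m\}^{n+1}$ such that some $x\in E_{C_0}$ satisfies $g_i\cdot x\in E_{C_i}$ for $i=1,\dots,n$; the set of these is $\mathrm{Con}(\mathfrak{g},\mathcal{E};X)$. Then $\mathrm{Con}(G\curvearrowright X)=\{\mathrm{Con}(\mathfrak{g},\mathcal{E};X): (\mathfrak{g},\mathcal{E})\text{ a configuration pair}\}$. *)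

theory Defs
  imports "HOL-Algebra.Group_Action" "HOL-Algebra.Generated_Groups" "HOL-Library.Equipollence"
begin

definition finitely_generated_group :: "('g, 'b) monoid_scheme \<Rightarrow> bool" where
  "finitely_generated_group G \<longleftrightarrow>
     (\<exists>S. finite S \<and> S \<subseteq> carrier G \<and> generate G S = carrier G)"

definition transitive_action :: "('g, 'b) monoid_scheme \<Rightarrow> 'x set \<Rightarrow> ('g \<Rightarrow> 'x \<Rightarrow> 'x) \<Rightarrow> bool" where
  "transitive_action G X \<phi> \<longleftrightarrow>
     group_action G X \<phi> \<and> (\<forall>x\<in>X. \<forall>y\<in>X. \<exists>g\<in>carrier G. \<phi> g x = y)"

definition is_partition_of :: "'x set \<Rightarrow> nat \<Rightarrow> (nat \<Rightarrow> 'x set) \<Rightarrow> bool" where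
  "is_partition_of X m E \<longleftrightarrow>
     (\<forall>i\<in>{1..m}. E i \<noteq> {} \<and> E i \<subseteq> X) \<and>
     (\<forall>i\<in>{1..m}. \<forall>j\<in>{1..m}. i \<noteq> j \<longrightarrow> E i \<inter> E j = {}) \<and>
     (\<Union>i\<in>{1..m}. E i) = X"

text \<open>Con(g, E; X) for g = (g_1,...,g_n) given as a list and E = (E_1,...,E_m);
  a configuration C = (C_0,...,C_n) is a list of length n+1.\<close>
definition configurations ::
  "('g \<Rightarrow> 'x \<Rightarrow> 'x) \<Rightarrow> 'g list \<Rightarrow> nat \<Rightarrow> (nat \<Rightarrow> 'x set) \<Rightarrow> nat list set" where
  "configurations \<phi> gs m E =
     {C. length C = length gs + 1 \<and> set C \<subseteq> {1..m} \<and>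
         (\<exists>x \<in> E (C ! 0). \<forall>i\<in>{1..length gs}. \<phi> (gs ! (i - 1)) x \<in> E (C ! i))}"

definition Con :: "('g, 'b) monoid_scheme \<Rightarrow> 'x set \<Rightarrow> ('g \<Rightarrow> 'x \<Rightarrow> 'x) \<Rightarrow> nat list set set" where
  "Con G X \<phi> =
     {configurations \<phi> gs m E | gs m E. set gs \<subseteq> carrier G \<and> is_partition_of X m E}"

end

theory Submission
  imports Defs "HOL-Library.Countable_Set"
begin

text \<open>Taking the empty tuple of group elements, the configuration sets of an action on X
  include {(1), ..., (m)} exactly when X has a partition into m pieces; so equal configuration
  sets force X and Y to admit partitions of the same sizes. This pins down |X| if X is finite,
  and otherwise shows that both sets are infinite. Finitely generated groups are countable, so
  their transitive actions live on countable sets, and any two countably infinite sets are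
  equipollent.\<close>

primrec generate_stage :: "('g, 'b) monoid_scheme \<Rightarrow> 'g set \<Rightarrow> nat \<Rightarrow> 'g set" where
  "generate_stage G S 0 = insert \<one>\<^bsub>G\<^esub> (S \<union> (\<lambda>h. inv\<^bsub>G\<^esub> h) ` S)"
| "generate_stage G S (Suc n) =
     generate_stage G S n \<union> (\<lambda>(a, b). a \<otimes>\<^bsub>G\<^esub> b) ` (generate_stage G S n \<times> generate_stage G S n)"

lemma finite_generate_stage: "finite S \<Longrightarrow> finite (generate_stage G S n)"
  by (induction n) auto

lemma generate_stage_mono: "m \<le> n \<Longrightarrow> generate_stage G S m \<subseteq> generate_stage G S n"
  by (rule lift_Suc_mono_le[where f = "generate_stage G S"]) auto

lemma generate_subset_UN_generate_stage: "generate G S \<subseteq> (\<Union>n. generate_stage G S n)"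
proof
  fix x assume "x \<in> generate G S"
  then show "x \<in> (\<Union>n. generate_stage G S n)"
  proof (induction rule: generate.induct)
    case (eng h1 h2)
    then obtain n1 n2 where "h1 \<in> generate_stage G S n1" "h2 \<in> generate_stage G S n2"
      by blast
    then have "h1 \<in> generate_stage G S (max n1 n2)" "h2 \<in> generate_stage G S (max n1 n2)"
      using generate_stage_mono[of n1 "max n1 n2" G S] generate_stage_mono[of n2 "max n1 n2" G S]
      by auto
    then have "h1 \<otimes>\<^bsub>G\<^esub> h2 \<in> generate_stage G S (Suc (max n1 n2))"
      by (auto intro!: image_eqI[where x = "(h1, h2)"])
    then show ?case by blast
  qed (auto intro: exI[of _ 0])
qed

lemma countable_generate: "finite S \<Longrightarrow> countable (generate G S)"
  by (rule countable_subset[OF generate_subset_UN_generate_stage])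
    (auto intro: countable_finite finite_generate_stage)

lemma countable_carrier_if_finitely_generated:
  "finitely_generated_group G \<Longrightarrow> countable (carrier G)"
  unfolding finitely_generated_group_def by (metis countable_generate)

lemma countable_if_transitive_action:
  assumes "transitive_action G X \<phi>" and "countable (carrier G)"
  shows "countable X"
proof (cases "X = {}")
  case False
  then obtain x0 where "x0 \<in> X" by blast
  with assms(1) have "X \<subseteq> (\<lambda>g. \<phi> g x0) ` carrier G"
    unfolding transitive_action_def by (metis image_eqI subsetI)
  with assms(2) show ?thesis by (meson countable_image countable_subset)
qed simp

lemma eqpoll_if_countable_infinite:
  assumes "countable A" "infinite A" "countable B" "infinite B"
  shows "A \<approx> B"
proof -
  obtain f where "bij_betw f A (UNIV :: nat set)" using countableE_infinite assms(1,2) by metis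
  moreover obtain g where "bij_betw g B (UNIV :: nat set)" using countableE_infinite assms(3,4) by metis
  ultimately show ?thesis
    unfolding eqpoll_def by (metis bij_betw_inv bij_betw_trans)
qed

definition admits_partition :: "'x set \<Rightarrow> nat \<Rightarrow> bool" where
  "admits_partition X m \<longleftrightarrow> (\<exists>E. is_partition_of X m E)"

lemma admits_partition_le_card:
  assumes "finite X" "admits_partition X m"
  shows "m \<le> card X"
proof -
  obtain E where E: "is_partition_of X m E" using assms(2) admits_partition_def by blast
  define pick where "pick i = (SOME x. x \<in> E i)" for i
  have pick: "pick i \<in> E i" if "i \<in> {1..m}" for i
    using E that unfolding pick_def is_partition_of_def by (metis some_in_eq)
  have "inj_on pick {1..m}"
    by (rule inj_onI) (metis E pick disjoint_iff is_partition_of_def)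
  moreover have "pick ` {1..m} \<subseteq> X" using pick E unfolding is_partition_of_def by blast
  ultimately show ?thesis using card_inj_on_le[OF _ _ assms(1)] by fastforce
qed

lemma admits_partition_card: "finite X \<Longrightarrow> admits_partition X (card X)"
proof -
  assume "finite X"
  then obtain h where h: "bij_betw h {1..card X} X" using ex_bij_betw_nat_finite_1 by blast
  then have "is_partition_of X (card X) (\<lambda>i. {h i})"
    unfolding is_partition_of_def
    using bij_betw_imp_surj_on[OF h] inj_on_eq_iff[OF bij_betw_imp_inj_on[OF h]] by auto
  then show ?thesis unfolding admits_partition_def by blast
qed

lemma admits_partition_if_infinite:
  assumes "infinite X" "m \<ge> 1"
  shows "admits_partition X m"
proof -
  obtain A where A: "A \<subseteq> X" "finite A" "card A = m - 1"
    using infinite_arbitrarily_large[OF assms(1)] by blast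
  obtain h where h: "bij_betw h {1..m - 1} A" using ex_bij_betw_nat_finite_1[OF A(2)] A(3) by metis
  have rest: "X - A \<noteq> {}" using A assms(1) by (metis Diff_eq_empty_iff finite_subset)
  have hA: "h i \<in> A" if "1 \<le> i" "i < m" for i
    using bij_betw_apply[OF h] that by simp
  define E where "E i = (if i < m then {h i} else X - A)" for i
  have pieces: "E i \<noteq> {} \<and> E i \<subseteq> X" if "i \<in> {1..m}" for i
    using that rest A(1) hA unfolding E_def by auto
  have "E i \<inter> E j = {}" if "i \<in> {1..m}" "j \<in> {1..m}" "i \<noteq> j" for i j
    using that hA inj_on_eq_iff[OF bij_betw_imp_inj_on[OF h]]
    unfolding E_def by auto
  moreover have "X \<subseteq> (\<Union>i\<in>{1..m}. E i)"
  proof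
    fix x assume "x \<in> X"
    show "x \<in> (\<Union>i\<in>{1..m}. E i)"
    proof (cases "x \<in> A")
      case True
      then obtain i where "i \<in> {1..m - 1}" "x = h i" using bij_betw_imp_surj_on[OF h] by blast
      then show ?thesis unfolding E_def by (intro UN_I[of i]) auto
    next
      case False
      with \<open>x \<in> X\<close> show ?thesis unfolding E_def using assms(2) by (intro UN_I[of m]) auto
    qed
  qed
  ultimately have "is_partition_of X m E"
    using pieces unfolding is_partition_of_def by blast
  then show ?thesis unfolding admits_partition_def by blast
qed

lemma finite_card_le_if_admits_partition_mono:
  assumes "finite Y" and mono: "\<And>m. m \<ge> 1 \<Longrightarrow> admits_partition X m \<Longrightarrow> admits_partition Y m"
  shows "finite X \<and> card X \<le> card Y"
proof -
  have "finite X"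
  proof (rule ccontr)
    assume "infinite X"
    then have "admits_partition Y (card Y + 1)"
      by (intro mono) (simp_all add: admits_partition_if_infinite)
    then show False using admits_partition_le_card[OF \<open>finite Y\<close>] by fastforce
  qed
  moreover have "card X \<le> card Y"
  proof (cases "card X = 0")
    case False
    then have "admits_partition Y (card X)"
      using mono admits_partition_card[OF \<open>finite X\<close>] by simp
    then show ?thesis using admits_partition_le_card[OF \<open>finite Y\<close>] by blast
  qed simp
  ultimately show ?thesis by blast
qed

lemma configurations_Nil:
  assumes "is_partition_of X m E"
  shows "configurations \<phi> [] m E = (\<lambda>i. [i]) ` {1..m}"
proof -
  have "C \<in> configurations \<phi> [] m E \<longleftrightarrow> C \<in> (\<lambda>i. [i]) ` {1..m}" for C
  proof
    assume "C \<in> configurations \<phi> [] m E"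
    then have "length C = 1" "set C \<subseteq> {1..m}" unfolding configurations_def by auto
    then show "C \<in> (\<lambda>i. [i]) ` {1..m}" by (cases C) auto
  next
    assume "C \<in> (\<lambda>i. [i]) ` {1..m}"
    with assms show "C \<in> configurations \<phi> [] m E"
      unfolding configurations_def is_partition_of_def by auto
  qed
  then show ?thesis by blast
qed

lemma singletons_in_Con_iff:
  assumes "m \<ge> 1"
  shows "(\<lambda>i. [i]) ` {1..m} \<in> Con G X \<phi> \<longleftrightarrow> admits_partition X m"
proof
  assume "admits_partition X m"
  then obtain E where E: "is_partition_of X m E" unfolding admits_partition_def by blast
  then have "configurations \<phi> [] m E \<in> Con G X \<phi>" unfolding Con_def by force
  with E show "(\<lambda>i. [i]) ` {1..m} \<in> Con G X \<phi>" by (simp add: configurations_Nil)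
next
  assume "(\<lambda>i. [i]) ` {1..m} \<in> Con G X \<phi>"
  then obtain gs m' E where conf: "(\<lambda>i. [i]) ` {1..m} = configurations \<phi> gs m' E"
    and E: "is_partition_of X m' E" unfolding Con_def by blast
  \<comment> \<open>the configurations have length 1, so the tuple of group elements is empty\<close>
  have "[1] \<in> configurations \<phi> gs m' E" using conf assms by auto
  then have "gs = []" unfolding configurations_def by simp
  with conf E have "(\<lambda>i. [i]) ` {1..m} = (\<lambda>i. [i]) ` {1..m'}" by (simp add: configurations_Nil)
  then have "{1..m} = {1..m'}" by (metis inj_image_eq_iff inj_def list.inject)
  with assms have "m = m'" by (metis Icc_eq_Icc)
  with E show "admits_partition X m" unfolding admits_partition_def by blast
qed

lemma admits_partition_transfer:
  assumes "Con G X \<phi> = Con H Y \<psi>" "m \<ge> 1" "admits_partition X m"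
  shows "admits_partition Y m"
  using assms singletons_in_Con_iff by metis

theorem mainTheorem3:
  fixes G :: "('g, 'b) monoid_scheme" and H :: "('h, 'c) monoid_scheme"
    and X :: "'x set" and Y :: "'y set"
    and \<phi> :: "'g \<Rightarrow> 'x \<Rightarrow> 'x" and \<psi> :: "'h \<Rightarrow> 'y \<Rightarrow> 'y"
  assumes "group G" and "group H"
    and "finitely_generated_group G" and "finitely_generated_group H"
    and "transitive_action G X \<phi>" and "transitive_action H Y \<psi>"
    and "Con G X \<phi> = Con H Y \<psi>"
  shows "X \<approx> Y"
proof -
  note XY = admits_partition_transfer[OF assms(7)]
  note YX = admits_partition_transfer[OF assms(7)[symmetric]]
  have "finite X \<longleftrightarrow> finite Y"
    using finite_card_le_if_admits_partition_mono XY YX by metis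
  show ?thesis
  proof (cases "finite X")
    case True
    with \<open>finite X \<longleftrightarrow> finite Y\<close> have "finite Y" by blast
    then have "card X = card Y"
      using True finite_card_le_if_admits_partition_mono XY YX by (metis le_antisym)
    with True \<open>finite Y\<close> show ?thesis by (simp add: eqpoll_iff_card)
  next
    case False
    with \<open>finite X \<longleftrightarrow> finite Y\<close> have "infinite Y" by blast
    moreover have "countable X" "countable Y"
      using assms(3-6) countable_if_transitive_action countable_carrier_if_finitely_generated
      by blast+
    ultimately show ?thesis using False eqpoll_if_countable_infinite by blast
  qed
qed

end
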